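(* For all $n\ge3$ and $s\ge0$, $$\mathbf{Sf}_{n,3}(p,1)\big|_{p^s}=\binom{n-1}{s+2},$$ and for all $n\ge4$ and $s\ge0$, $$\mathbf{Sf}_{n,4}(p,1)\big|_{p^s}=(2^{s+1}-1)\binom{n-1}{s+3}.$$
   Context: $F_1(p,q)=q$, $F_2(p,q)=q^2$ and $F_m(p,q)=qF_{m-1}(p,q)+pF_{m-2}(p,q)$ for $m\ge3$. Let $(x)_{\downarrow_{F,p,q,0}}=1$ and $(x)_{\downarrow_{F,p,q,k}}=x(x-F_1(p,q))\cdots(x-F_{k-1}(p,q))$ for $k\ge1$. Define the polynomials $\mathbf{Sf}_{n,k}(p,q)$ for $0\le k\le n$ by $x^n=\sum_{k=0}^n\mathbf{Sf}_{n,k}(p,q)(x)_{\downarrow_{F,p,q,k}}$. $\mathbf{Sf}_{n,k}(p,1)$ is the specialization $q=1$, and $f|_{p^s}$ denotes the coefficient of $p^s$ in the polynomial $f$ in $p$. *)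

theory Defs
  imports "HOL-Computational_Algebra.Polynomial"
begin

text \<open>Bivariate polynomials in p, q are represented as int poly poly:
  polynomials in q whose coefficients are polynomials in p.  The variable x of the
  expansion is a third variable, giving int poly poly poly.\<close>

definition pvar :: "int poly poly" where "pvar = [:[:0, 1:]:]"
definition qvar :: "int poly poly" where "qvar = [:0, 1:]"

fun Fib_pq :: "nat \<Rightarrow> int poly poly" where
  "Fib_pq 0 = 0"
| "Fib_pq (Suc 0) = qvar"
| "Fib_pq (Suc (Suc 0)) = qvar ^ 2"
| "Fib_pq (Suc (Suc (Suc m))) = qvar * Fib_pq (Suc (Suc m)) + pvar * Fib_pq (Suc m)"

definition falling_F :: "nat \<Rightarrow> int poly poly poly" where
  "falling_F k = (if k = 0 then 1 else [:0, 1:] * (\<Prod>i\<in>{1..<k}. [:- Fib_pq i, 1:]))"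

definition Sf :: "nat \<Rightarrow> nat \<Rightarrow> int poly poly" where
  "Sf n = (THE c. (\<forall>k>n. c k = 0) \<and>
                  [:0, 1:] ^ n = (\<Sum>k\<le>n. [:c k:] * falling_F k))"

definition Sf_q1 :: "nat \<Rightarrow> nat \<Rightarrow> int poly" where
  "Sf_q1 n k = poly (Sf n k) 1"

end

theory Submission
  imports Defs
begin

text \<open>Multiplying x^n by x and rewriting x (x)_k = (x)_{k+1} + F_k (x)_k shows that the
  coefficients satisfy the triangular recurrence Sf(n+1,k+1) = Sf(n,k) + F_{k+1} Sf(n,k+1),
  the expansion being unique because the basis is monic with degree k.  At q = 1 we have
  F_2 = 1, F_3 = 1 + p and F_4 = 1 + 2p, so column 2 is n - 1, and columns 3 and 4 follow
  from the recurrence by induction on n, comparing coefficients of p^s via Pascal's rule.\<close>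

lemma falling_F_Suc: "falling_F (Suc k) = falling_F k * [:- Fib_pq k, 1:]"
proof (cases "k = 0")
  case True
  then show ?thesis by (simp add: falling_F_def)
next
  case False
  then have "{1..<Suc k} = insert k {1..<k}" by auto
  with False show ?thesis by (simp add: falling_F_def mult_ac)
qed

lemma degree_falling_F: "degree (falling_F k) = k"
  and lead_coeff_falling_F: "lead_coeff (falling_F k) = 1"
proof (induction k)
  case 0
  { case 1 show ?case by (simp add: falling_F_def) }
  { case 2 show ?case by (simp add: falling_F_def) }
next
  case (Suc k)
  have "falling_F k \<noteq> 0" using Suc.IH(2) by auto
  then have deg: "degree (falling_F (Suc k)) = Suc k"
    using degree_mult_eq[of "falling_F k" "[:- Fib_pq k, 1:]"] by (simp add: falling_F_Suc Suc.IH(1))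
  { case 1 show ?case by (rule deg) }
  { case 2 show ?case by (simp only: falling_F_Suc lead_coeff_mult Suc.IH(2)) simp }
qed

lemma monic_basis_combination_eq_0:
  fixes b :: "nat \<Rightarrow> 'a::comm_ring_1 poly"
  assumes deg: "\<And>k. degree (b k) = k" and lead: "\<And>k. lead_coeff (b k) = 1"
    and zero: "(\<Sum>k\<le>n. smult (e k) (b k)) = 0" and "k \<le> n"
  shows "e k = 0"
  using zero \<open>k \<le> n\<close>
proof (induction n arbitrary: k)
  case 0
  then have "coeff (smult (e 0) (b 0)) 0 = 0" by simp
  then show ?case using lead[of 0] deg[of 0] 0 by simp
next
  case (Suc n)
  define A where "A = (\<Sum>k\<le>n. smult (e k) (b k))"
  have "degree A \<le> n"
    unfolding A_def by (rule degree_sum_le) (auto intro: order.trans[OF degree_smult_le] simp: deg)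
  then have "coeff (A + smult (e (Suc n)) (b (Suc n))) (Suc n) = e (Suc n)"
    using lead[of "Suc n"] by (simp add: deg coeff_eq_0)
  moreover have sum: "A + smult (e (Suc n)) (b (Suc n)) = 0"
    using Suc.prems(1) by (simp add: A_def)
  ultimately have last: "e (Suc n) = 0" by simp
  with sum have "A = 0" by simp
  with Suc.IH[of k] last show ?case
    unfolding A_def by (cases "k = Suc n") (use Suc.prems(2) in auto)
qed

fun Sf_rec :: "nat \<Rightarrow> nat \<Rightarrow> int poly poly" where
  "Sf_rec 0 k = (if k = 0 then 1 else 0)"
| "Sf_rec (Suc n) 0 = 0"
| "Sf_rec (Suc n) (Suc k) = Sf_rec n k + Fib_pq (Suc k) * Sf_rec n (Suc k)"

lemma Sf_rec_eq_0: "n < k \<Longrightarrow> Sf_rec n k = 0"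
  by (induction n arbitrary: k) (auto elim: less_natE)

lemma power_x_eq_sum_Sf_rec: "[:0, 1:] ^ n = (\<Sum>k\<le>n. [:Sf_rec n k:] * falling_F k)"
proof (induction n)
  case 0
  then show ?case by (simp add: falling_F_def)
next
  case (Suc n)
  have x_falling_F: "[:0, 1:] * falling_F k = falling_F (Suc k) + [:Fib_pq k:] * falling_F k" for k
    unfolding falling_F_Suc by (simp add: algebra_simps)
  have "[:0, 1:] ^ Suc n = (\<Sum>k\<le>n. [:Sf_rec n k:] * ([:0, 1:] * falling_F k))"
    using Suc by (simp add: sum_distrib_left algebra_simps)
  also have "\<dots> = (\<Sum>k\<le>n. [:Sf_rec n k:] * falling_F (Suc k))
                 + (\<Sum>k\<le>Suc n. [:Fib_pq k * Sf_rec n k:] * falling_F k)"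
    unfolding x_falling_F by (simp add: sum.distrib algebra_simps Sf_rec_eq_0)
  also have "(\<Sum>k\<le>Suc n. [:Fib_pq k * Sf_rec n k:] * falling_F k)
           = (\<Sum>k\<le>n. [:Fib_pq (Suc k) * Sf_rec n (Suc k):] * falling_F (Suc k))"
    by (subst sum.atMost_Suc_shift) simp
  also have "(\<Sum>k\<le>n. [:Sf_rec n k:] * falling_F (Suc k)) + \<dots>
           = (\<Sum>k\<le>Suc n. [:Sf_rec (Suc n) k:] * falling_F k)"
    by (simp add: sum.atMost_Suc_shift sum.distrib[symmetric] smult_add_left distrib_right
        del: sum.atMost_Suc)
  finally show ?case .
qed

lemma Sf_eq_Sf_rec: "Sf n = Sf_rec n"
  unfolding Sf_def
proof (rule the_equality)
  show "(\<forall>k>n. Sf_rec n k = 0) \<and> [:0, 1:] ^ n = (\<Sum>k\<le>n. [:Sf_rec n k:] * falling_F k)"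
    using Sf_rec_eq_0 power_x_eq_sum_Sf_rec by auto
next
  fix c assume c: "(\<forall>k>n. c k = 0) \<and> [:0, 1:] ^ n = (\<Sum>k\<le>n. [:c k:] * falling_F k)"
  have "(\<Sum>k\<le>n. smult (c k - Sf_rec n k) (falling_F k))
      = (\<Sum>k\<le>n. [:c k:] * falling_F k) - (\<Sum>k\<le>n. [:Sf_rec n k:] * falling_F k)"
    by (simp add: sum_subtractf[symmetric] smult_diff_left)
  also have "\<dots> = 0" using c power_x_eq_sum_Sf_rec[of n] by simp
  finally have "c k = Sf_rec n k" if "k \<le> n" for k
    using monic_basis_combination_eq_0[OF degree_falling_F lead_coeff_falling_F _ that,
        of "\<lambda>k. c k - Sf_rec n k"] by simp
  with c Sf_rec_eq_0[of n] show "c = Sf_rec n"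
    by (metis ext not_le)
qed

lemma Sf_q1_Suc_Suc:
  "Sf_q1 (Suc n) (Suc k) = Sf_q1 n k + poly (Fib_pq (Suc k)) 1 * Sf_q1 n (Suc k)"
  by (simp add: Sf_q1_def Sf_eq_Sf_rec)

lemma Sf_q1_eq_0: "n < k \<Longrightarrow> Sf_q1 n k = 0"
  by (simp add: Sf_q1_def Sf_eq_Sf_rec Sf_rec_eq_0)

lemma Fib_pq_2_at_1: "poly (Fib_pq 2) 1 = 1"
  by (simp add: qvar_def numeral_2_eq_2)

lemma Fib_pq_3_at_1: "poly (Fib_pq 3) 1 = [:1, 1:]"
  by (simp add: qvar_def pvar_def numeral_3_eq_3 pCons_one poly_eq_iff coeff_pCons coeff_1
      split: nat.split)

lemma Fib_pq_4_at_1: "poly (Fib_pq 4) 1 = [:1, 2:]"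
  by (simp add: qvar_def pvar_def eval_nat_numeral pCons_one numeral_poly poly_eq_iff coeff_pCons
      coeff_1 split: nat.split)

lemma coeff_linear_mult_0: "coeff ([:a, b:] * p) 0 = a * coeff p 0"
  by (simp add: mult_pCons_left)

lemma coeff_linear_mult_Suc: "coeff ([:a, b:] * p) (Suc s) = a * coeff p (Suc s) + b * coeff p s"
  by (simp add: mult_pCons_left)

lemma Sf_q1_1: "1 \<le> n \<Longrightarrow> Sf_q1 n 1 = 1"
proof (induction n rule: nat_induct_at_least)
  case base
  then show ?case by (simp add: Sf_q1_def Sf_eq_Sf_rec)
next
  case (Suc n)
  have "Sf_q1 n 0 = 0" using Suc.hyps by (cases n) (auto simp: Sf_q1_def Sf_eq_Sf_rec)
  then show ?case using Suc.IH Sf_q1_Suc_Suc[of n 0] by (simp add: qvar_def)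
qed

lemma Sf_q1_2: "1 \<le> n \<Longrightarrow> Sf_q1 n 2 = of_nat (n - 1)"
proof (induction n rule: nat_induct_at_least)
  case base
  then show ?case by (simp add: Sf_q1_eq_0)
next
  case (Suc n)
  then show ?case
    using Sf_q1_Suc_Suc[of n 1] Sf_q1_1[of n] Fib_pq_2_at_1 by (simp add: numeral_2_eq_2 of_nat_diff)
qed

lemma coeff_Sf_q1_3: "1 \<le> n \<Longrightarrow> coeff (Sf_q1 n 3) s = int ((n - 1) choose (s + 2))"
proof (induction n arbitrary: s rule: nat_induct_at_least)
  case base
  then show ?case by (simp add: Sf_q1_eq_0)
next
  case (Suc n)
  then obtain m where m: "n = Suc m" by (cases n) auto
  have rec: "Sf_q1 (Suc n) 3 = of_nat m + [:1, 1:] * Sf_q1 n 3"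
    using Sf_q1_Suc_Suc[of n 2] Sf_q1_2[of n] Fib_pq_3_at_1 m by (simp add: numeral_3_eq_3)
  have IH: "coeff (Sf_q1 (Suc m) 3) t = int (m choose (t + 2))" for t
    using Suc.IH m by simp
  show ?case
    unfolding rec by (cases s) (simp_all add: coeff_linear_mult_0 coeff_linear_mult_Suc of_nat_poly
        IH m numeral_2_eq_2)
qed

lemma coeff_Sf_q1_4:
  "1 \<le> n \<Longrightarrow> coeff (Sf_q1 n 4) s = (2 ^ (s + 1) - 1) * int ((n - 1) choose (s + 3))"
proof (induction n arbitrary: s rule: nat_induct_at_least)
  case base
  then show ?case by (simp add: Sf_q1_eq_0)
next
  case (Suc n)
  then obtain m where m: "n = Suc m" by (cases n) auto
  have rec: "Sf_q1 (Suc n) 4 = Sf_q1 n 3 + [:1, 2:] * Sf_q1 n 4"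
    using Sf_q1_Suc_Suc[of n 3] Fib_pq_4_at_1 by (simp add: eval_nat_numeral)
  have IH: "coeff (Sf_q1 (Suc m) 4) t = (2 ^ (t + 1) - 1) * int (m choose (t + 3))" for t
    using Suc.IH m by simp
  have col3: "coeff (Sf_q1 (Suc m) 3) t = int (m choose (t + 2))" for t
    using coeff_Sf_q1_3[OF Suc.hyps] m by simp
  show ?case
  proof (cases s)
    case 0
    then show ?thesis
      unfolding rec using IH[of 0] col3[of 0] by (simp add: coeff_linear_mult_0 m eval_nat_numeral)
  next
    case (Suc t)
    then show ?thesis
      unfolding rec using IH[of s] IH[of t] col3[of s]
      by (simp add: coeff_linear_mult_Suc m eval_nat_numeral algebra_simps)
  qed
qed

theorem theorem13:
  shows "(\<forall>n s. n \<ge> 3 \<longrightarrow> coeff (Sf_q1 n 3) s = int ((n - 1) choose (s + 2)))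
       \<and> (\<forall>n s. n \<ge> 4 \<longrightarrow>
            coeff (Sf_q1 n 4) s = (2 ^ (s + 1) - 1) * int ((n - 1) choose (s + 3)))"
  using coeff_Sf_q1_3 coeff_Sf_q1_4 by simp

end
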